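(* Let $n$ be even and let $F\colon \mathbb F_2^n\to\mathbb F_2^n$ be a quadratic APN function. For $b\in\mathbb F_2^n\setminus\{0\}$ let $V_b=T_b\cup\overline{T_b}$ as defined in the context. Then the collection $\{V_b\colon b\in\mathbb F_2^n\setminus\{0\}\}$ is a vector space partition of $\mathbb F_2^n$, i.e. each $V_b$ is a subspace, $V_{b_1}\cap V_{b_2}=\{0\}$ for $b_1\neq b_2$, and every nonzero vector of $\mathbb F_2^n$ lies in some $V_b$.
   Context: $\langle\cdot,\cdot\rangle$ is the standard dot product on $\mathbb F_2^n$. A function $F\colon\mathbb F_2^n\to\mathbb F_2^n$ is APN if for every $a\neq 0$ and every $c$, the equation $F(x)+F(x+a)=c$ has at most $2$ solutions $x$. $F$ is quadratic if every component function $x\mapsto\langle b,F(x)\rangle$ is the sum of a quadratic form and an affine function over $\mathbb F_2$. Put $D_{F,a}(x)=F(x)+F(x+a)$, $H_b=\{x\colon\langle b,x\rangle=0\}$, $\overline{H_b}=\{x\colon\langle b,x\rangle=1\}$, $T_b=\{a\in\mathbb F_2^n\colon \mathrm{Im}(D_{F,a})=H_b\}\cup\{0\}$, $\overline{T_b}=\{a\in\mathbb F_2^n\colon \mathrm{Im}(D_{F,a})=\overline{H_b}\}$, and $V_b=T_b\cup\overline{T_b}$. (For a quadratic APN function and $a\ne 0$, $\mathrm{Im}(D_{F,a})$ is an affine hyperplane; $V_b$ is a linear subspace.) *)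

theory Defs
  imports "HOL-Analysis.Analysis" "HOL-Library.Z2"
begin

text \<open>F_2^n is modelled as bit ^ 'n, with n = CARD('n).\<close>

definition dotp :: "bit ^ 'n \<Rightarrow> bit ^ 'n \<Rightarrow> bit" where
  "dotp x y = (\<Sum>i\<in>UNIV. x $ i * y $ i)"

definition is_APN :: "(bit ^ 'n \<Rightarrow> bit ^ 'n) \<Rightarrow> bool" where
  "is_APN F \<longleftrightarrow> (\<forall>a c. a \<noteq> 0 \<longrightarrow> card {x. F x + F (x + a) = c} \<le> 2)"

definition is_quadratic :: "(bit ^ 'n \<Rightarrow> bit ^ 'n) \<Rightarrow> bool" where
  "is_quadratic F \<longleftrightarrow> (\<forall>b. \<exists>(q :: 'n \<Rightarrow> 'n \<Rightarrow> bit) (l :: 'n \<Rightarrow> bit) (e :: bit).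
      \<forall>x. dotp b (F x) = (\<Sum>i\<in>UNIV. \<Sum>j\<in>UNIV. q i j * x $ i * x $ j)
                          + (\<Sum>i\<in>UNIV. l i * x $ i) + e)"

definition DF :: "(bit ^ 'n \<Rightarrow> bit ^ 'n) \<Rightarrow> bit ^ 'n \<Rightarrow> bit ^ 'n \<Rightarrow> bit ^ 'n" where
  "DF F a x = F x + F (x + a)"

definition H :: "bit ^ 'n \<Rightarrow> (bit ^ 'n) set" where
  "H b = {x. dotp b x = 0}"

definition Hbar :: "bit ^ 'n \<Rightarrow> (bit ^ 'n) set" where
  "Hbar b = {x. dotp b x = 1}"

definition T :: "(bit ^ 'n \<Rightarrow> bit ^ 'n) \<Rightarrow> bit ^ 'n \<Rightarrow> (bit ^ 'n) set" where
  "T F b = {a. range (DF F a) = H b} \<union> {0}"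

definition Tbar :: "(bit ^ 'n \<Rightarrow> bit ^ 'n) \<Rightarrow> bit ^ 'n \<Rightarrow> (bit ^ 'n) set" where
  "Tbar F b = {a. range (DF F a) = Hbar b}"

definition V :: "(bit ^ 'n \<Rightarrow> bit ^ 'n) \<Rightarrow> bit ^ 'n \<Rightarrow> (bit ^ 'n) set" where
  "V F b = T F b \<union> Tbar F b"

text \<open>Linear subspace over F_2: contains 0 and closed under addition
  (scalar multiplication by 0 or 1 is then automatic).\<close>
definition f2_subspace :: "(bit ^ 'n) set \<Rightarrow> bool" where
  "f2_subspace S \<longleftrightarrow> 0 \<in> S \<and> (\<forall>x\<in>S. \<forall>y\<in>S. x + y \<in> S)"

end

(*
  For a quadratic F and a \<noteq> 0 the map  polar F a = (\<lambda>x. F (a + x) + F a + F x + F 0)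
  is linear, and D_{F,a} x = polar F a x + D_{F,a} 0. The APN property says that its kernel is
  {0, a}, so its image is a subgroup of index two, i.e. a hyperplane H c with c \<noteq> 0, and
  Im(D_{F,a}) is its translate H c or Hbar c. Thus a \<in> V_b exactly when <b, polar F a x> = 0
  for all x: V_b is the radical of the bilinear form of the component <b, F>, hence a subspace,
  and since H c determines c, each a \<noteq> 0 lies in V_c for exactly one c.
*)

theory Submission
  imports Defs
begin

instance bit :: finite
proof
  have "(UNIV :: bit set) = {0, 1}"
    by (auto intro: bit.exhaust)
  then show "finite (UNIV :: bit set)"
    by (metis finite.emptyI finite.insertI)
qed

\<comment> \<open>Z2 rewrites + and * on bit to xor and and by default; we argue with the field operations.\<close>
declare add_bit_eq_xor [simp del] mult_bit_eq_and [simp del]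

lemma bit_add_self [simp]: "(x :: bit) + x = 0"
  by (cases x) simp_all

lemma bit_add_eq_0_iff: "(x :: bit) + y = 0 \<longleftrightarrow> x = y"
  by (cases x; cases y) simp_all

lemma vec_bit_add_self [simp]: "(x :: bit ^ 'n) + x = 0"
  by (simp add: vec_eq_iff)

lemma vec_bit_add_cancel_left [simp]: "(x :: bit ^ 'n) + (x + y) = y"
  by (simp flip: add.assoc)

lemma vec_bit_add_eq_0_iff: "(x :: bit ^ 'n) + y = 0 \<longleftrightarrow> x = y"
  by (metis vec_bit_add_cancel_left add.right_neutral)

lemma dotp_add_right: "dotp b (x + y) = dotp b x + dotp b y"
  unfolding dotp_def by (simp only: vector_add_component distrib_left sum.distrib)

lemma dotp_axis_right: "dotp b (axis i 1) = b $ i"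
  unfolding dotp_def axis_def by (simp add: if_distrib cong: if_cong)

lemma dotp_axis_left: "dotp (axis i 1) x = x $ i"
  using dotp_axis_right[of x i] by (simp add: dotp_def mult.commute)

lemma dotp_zero_left [simp]: "dotp 0 x = 0"
  by (simp add: dotp_def)

lemma dotp_zero_right [simp]: "dotp b 0 = 0"
  by (simp add: dotp_def)

lemma dotp_eqI: "(\<And>x. dotp b x = dotp c x) \<Longrightarrow> b = c"
  by (metis dotp_axis_right vec_eq_iff)

lemma additive_bit_functional_eq_dotp:
  fixes \<phi> :: "bit ^ 'n \<Rightarrow> bit"
  assumes "Modules.additive \<phi>"
  shows "\<phi> x = dotp (\<chi> i. \<phi> (axis i 1)) x"
proof -
  have scale: "\<phi> (c *s v) = c * \<phi> v" for c v
    by (cases c) (simp_all add: additive.zero[OF assms])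
  have "\<phi> x = \<phi> (\<Sum>i\<in>UNIV. x $ i *s axis i 1)"
    by (simp only: basis_expansion)
  also have "\<dots> = (\<Sum>i\<in>UNIV. \<phi> (x $ i *s axis i 1))"
    by (rule additive.sum[OF assms])
  also have "\<dots> = (\<Sum>i\<in>UNIV. x $ i * \<phi> (axis i 1))"
    by (simp only: scale)
  finally show ?thesis
    by (simp add: dotp_def mult.commute)
qed

lemma H_subset_imp_eq:
  assumes "H c \<subseteq> H b" and "b \<noteq> 0"
  shows "c = b"
proof (rule dotp_eqI)
  obtain i where "b $ i = 1"
    using \<open>b \<noteq> 0\<close> by (auto simp: vec_eq_iff)
  then have bx: "dotp b (axis i 1) = 1"
    by (simp add: dotp_axis_right)
  then have cx: "dotp c (axis i 1) = 1"
    using assms(1) by (auto simp: H_def)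
  fix y
  show "dotp c y = dotp b y"
  proof (cases "dotp c y")
    case zero
    then show ?thesis
      using assms(1) by (auto simp: H_def)
  next
    case one
    then have "dotp c (y + axis i 1) = 0"
      using cx by (simp add: dotp_add_right)
    then have "dotp b (y + axis i 1) = 0"
      using assms(1) by (auto simp: H_def)
    then show ?thesis
      using one bx by (simp add: dotp_add_right bit_add_eq_0_iff)
  qed
qed

lemma image_add_H: "(\<lambda>x. x + d) ` H c = (if dotp c d = 0 then H c else Hbar c)"
proof -
  have "(\<lambda>x. x + d) ` H c = {y. dotp c y = dotp c d}"
  proof (intro set_eqI iffI)
    fix y
    assume "y \<in> {y. dotp c y = dotp c d}"
    then have "y + d \<in> H c" and "y = (y + d) + d"
      by (simp_all add: H_def dotp_add_right bit_add_eq_0_iff add.assoc)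
    then show "y \<in> (\<lambda>x. x + d) ` H c"
      by blast
  qed (auto simp: H_def dotp_add_right bit_add_eq_0_iff)
  then show ?thesis
    by (cases "dotp c d") (simp_all add: H_def Hbar_def)
qed

lemma f2_subspace_index_two_eq_H:
  fixes W :: "(bit ^ 'n) set"
  assumes "f2_subspace W" and "card (UNIV :: (bit ^ 'n) set) = 2 * card W"
  shows "\<exists>b. b \<noteq> 0 \<and> W = H b"
proof -
  have add_mem_iff: "u + v \<in> W \<longleftrightarrow> v \<in> W" if "u \<in> W" for u v
    using assms(1) that unfolding f2_subspace_def by (metis vec_bit_add_cancel_left)
  then have add_mem_iff': "u + v \<in> W \<longleftrightarrow> u \<in> W" if "v \<in> W" for u v
    using that by (metis add.commute)
  have add_nonmem: "u + v \<in> W" if u: "u \<notin> W" and v: "v \<notin> W" for u v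
  proof -
    have "W \<inter> (+) u ` W = {}"
      using u add_mem_iff by (auto simp: add.commute)
    moreover have "card ((+) u ` W) = card W"
      by (rule card_image) (simp add: inj_on_def)
    ultimately have "card (W \<union> (+) u ` W) = card (UNIV :: (bit ^ 'n) set)"
      using assms(2) by (simp add: card_Un_disjoint)
    then have "W \<union> (+) u ` W = UNIV"
      by (rule card_subset_eq[OF finite subset_UNIV])
    then obtain w where "w \<in> W" and "v = u + w"
      using v by blast
    then show ?thesis
      by simp
  qed
  define \<phi> where "\<phi> x = (if x \<in> W then 0 else 1 :: bit)" for x
  have "Modules.additive \<phi>"
    by standard (auto simp: \<phi>_def add_mem_iff add_mem_iff' add_nonmem)
  then obtain b where \<phi>: "\<And>x. \<phi> x = dotp b x"
    using additive_bit_functional_eq_dotp by blast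
  then have W: "W = H b"
    by (force simp: H_def \<phi>_def split: if_splits)
  have "b \<noteq> 0"
  proof
    assume "b = 0"
    then have "W = UNIV"
      using W by (simp add: H_def)
    then show False
      using assms(2) by simp
  qed
  with W show ?thesis
    by blast
qed

lemma card_UNIV_eq_card_kernel_mult_card_range:
  fixes f :: "'a::{ab_group_add,finite} \<Rightarrow> 'b::ab_group_add"
  assumes "Modules.additive f"
  shows "card (UNIV :: 'a set) = card {x. f x = 0} * card (range f)"
proof -
  let ?K = "{x. f x = 0}"
  have fiber: "{y. f y = f x} = (+) x ` ?K" for x
  proof (intro set_eqI iffI)
    fix y
    assume "y \<in> {y. f y = f x}"
    then have "y - x \<in> ?K" and "y = x + (y - x)"
      by (simp_all add: additive.diff[OF assms])
    then show "y \<in> (+) x ` ?K"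
      by blast
  qed (auto simp: additive.add[OF assms])
  have "card (UNIV :: 'a set) = card (\<Union>w\<in>range f. {y. f y = w})"
    by (rule arg_cong[where f = card]) auto
  also have "\<dots> = (\<Sum>w\<in>range f. card {y. f y = w})"
    by (rule card_UN_disjoint) auto
  also have "\<dots> = (\<Sum>w\<in>range f. card ?K)"
    by (intro sum.cong) (auto simp: fiber card_image)
  finally show ?thesis
    by simp
qed

definition polar :: "(bit ^ 'n \<Rightarrow> bit ^ 'n) \<Rightarrow> bit ^ 'n \<Rightarrow> bit ^ 'n \<Rightarrow> bit ^ 'n" where
  "polar F x y = F (x + y) + F x + F y + F 0"

lemma polar_commute: "polar F x y = polar F y x"
  unfolding polar_def by (simp add: add_ac)

lemma polar_zero_left [simp]: "polar F 0 x = 0"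
  unfolding polar_def by (simp add: add_ac)

lemma polar_eq_DF: "polar F a x = DF F a x + DF F a 0"
  unfolding polar_def DF_def by (simp add: add_ac)

lemma polar_quadratic_form:
  fixes g :: "bit ^ 'n \<Rightarrow> bit"
  assumes g: "\<And>z. g z = (\<Sum>i\<in>UNIV. \<Sum>j\<in>UNIV. q i j * z $ i * z $ j) + (\<Sum>i\<in>UNIV. l i * z $ i) + e"
  shows "g (x + y) + g x + g y + g 0 = (\<Sum>i\<in>UNIV. \<Sum>j\<in>UNIV. q i j * (x $ i * y $ j + y $ i * x $ j))"
proof -
  define Q where "Q z = (\<Sum>i\<in>UNIV. \<Sum>j\<in>UNIV. q i j * z $ i * z $ j)" for z :: "bit ^ 'n"
  define L where "L z = (\<Sum>i\<in>UNIV. l i * z $ i)" for z :: "bit ^ 'n"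
  have quad_term: "c * (u + v) * (u' + v') + c * u * u' + c * v * v' + c * 0 * 0 = c * (u * v' + v * u')"
    for c u v u' v' :: bit
    by (cases c; cases u; cases v; cases u'; cases v') simp_all
  have lin_term: "c * (u + v) + c * u + c * v + c * 0 = 0" for c u v :: bit
    by (cases c; cases u; cases v) simp_all
  have Q_polar: "Q (x + y) + Q x + Q y + Q 0 = (\<Sum>i\<in>UNIV. \<Sum>j\<in>UNIV. q i j * (x $ i * y $ j + y $ i * x $ j))"
    unfolding Q_def by (simp only: sum.distrib[symmetric] vector_add_component zero_index quad_term)
  have L_polar: "L (x + y) + L x + L y + L 0 = 0"
    unfolding L_def by (simp only: sum.distrib[symmetric] vector_add_component zero_index lin_term sum.neutral_const)
  have "g z = Q z + L z + e" for z
    by (simp add: g Q_def L_def)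
  then have "g (x + y) + g x + g y + g 0
      = (Q (x + y) + Q x + Q y + Q 0) + (L (x + y) + L x + L y + L 0) + (e + e + e + e)"
    by (simp only: add_ac)
  then show ?thesis
    by (simp add: Q_polar L_polar)
qed

lemma additive_polar:
  assumes "is_quadratic F"
  shows "Modules.additive (polar F a)"
proof
  fix x y
  show "polar F a (x + y) = polar F a x + polar F a y"
  proof (subst vec_eq_iff, intro allI)
    fix k
    obtain q l e where "\<forall>z. dotp (axis k 1) (F z) = (\<Sum>i\<in>UNIV. \<Sum>j\<in>UNIV. q i j * z $ i * z $ j)
        + (\<Sum>i\<in>UNIV. l i * z $ i) + e"
      using assms unfolding is_quadratic_def by blast
    then have component: "polar F a z $ k = (\<Sum>i\<in>UNIV. \<Sum>j\<in>UNIV. q i j * (a $ i * z $ j + z $ i * a $ j))"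
      for z
      using polar_quadratic_form[of "\<lambda>z. F z $ k" q l e a z] by (simp add: polar_def dotp_axis_left)
    show "polar F a (x + y) $ k = (polar F a x + polar F a y) $ k"
      by (simp add: component algebra_simps sum.distrib)
  qed
qed

lemma APN_kernel_polar:
  assumes "is_APN F" and "a \<noteq> 0"
  shows "{x. polar F a x = 0} = {0, a}"
proof -
  let ?S = "{x. F x + F (x + a) = F 0 + F a}"
  have "{0, a} \<subseteq> ?S"
    by (simp add: add.commute)
  moreover have "card ?S \<le> 2"
    using assms unfolding is_APN_def by blast
  moreover have "card {0, a} = 2"
    using assms(2) by simp
  ultimately have "{0, a} = ?S"
    by (intro card_seteq) simp_all
  moreover have "{x. polar F a x = 0} = ?S"
    by (simp add: polar_eq_DF DF_def vec_bit_add_eq_0_iff)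
  ultimately show ?thesis
    by simp
qed

lemma range_polar_eq_H:
  fixes F :: "bit ^ 'n \<Rightarrow> bit ^ 'n"
  assumes "is_APN F" and "is_quadratic F" and "a \<noteq> 0"
  shows "\<exists>c. c \<noteq> 0 \<and> range (polar F a) = H c"
proof (rule f2_subspace_index_two_eq_H)
  have additive: "Modules.additive (polar F a)"
    using assms(2) by (rule additive_polar)
  show "f2_subspace (range (polar F a))"
    unfolding f2_subspace_def
  proof (intro conjI ballI)
    show "0 \<in> range (polar F a)"
      using additive.zero[OF additive] by (metis rangeI)
    fix u v
    assume "u \<in> range (polar F a)" and "v \<in> range (polar F a)"
    then show "u + v \<in> range (polar F a)"
      by (auto simp flip: additive.add[OF additive])
  qed
  show "card (UNIV :: (bit ^ 'n) set) = 2 * card (range (polar F a))"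
    using card_UNIV_eq_card_kernel_mult_card_range[OF additive] APN_kernel_polar[OF assms(1,3)] assms(3)
    by simp
qed

lemma ex_mem_V:
  assumes "is_APN F" and "is_quadratic F" and "a \<noteq> 0"
  shows "\<exists>c. c \<noteq> 0 \<and> range (polar F a) = H c \<and> a \<in> V F c"
proof -
  obtain c where "c \<noteq> 0" and c: "range (polar F a) = H c"
    using range_polar_eq_H[OF assms] by blast
  have "range (DF F a) = (\<lambda>v. v + DF F a 0) ` range (polar F a)"
    unfolding image_image by (simp add: polar_eq_DF add.assoc)
  then have "range (DF F a) = H c \<or> range (DF F a) = Hbar c"
    by (simp add: c image_add_H)
  with \<open>c \<noteq> 0\<close> c show ?thesis
    unfolding V_def T_def Tbar_def by blast
qed

lemma mem_V_imp_radical: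
  assumes "a \<in> V F b"
  shows "dotp b (polar F a x) = 0"
proof (cases "a = 0")
  case False
  then have "range (DF F a) = H b \<or> range (DF F a) = Hbar b"
    using assms unfolding V_def T_def Tbar_def by blast
  then obtain k where k: "range (DF F a) = {y. dotp b y = k}"
    unfolding H_def Hbar_def by blast
  have "DF F a y \<in> {y. dotp b y = k}" for y
    unfolding k[symmetric] by (rule rangeI)
  then show ?thesis
    by (simp add: polar_eq_DF dotp_add_right)
qed simp

lemma V_eq_radical:
  assumes "is_APN F" and "is_quadratic F" and "b \<noteq> 0"
  shows "V F b = {a. \<forall>x. dotp b (polar F a x) = 0}"
proof (intro set_eqI iffI CollectI allI mem_V_imp_radical)
  fix a
  assume "a \<in> {a. \<forall>x. dotp b (polar F a x) = 0}"
  then have "range (polar F a) \<subseteq> H b"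
    by (auto simp: H_def)
  show "a \<in> V F b"
  proof (cases "a = 0")
    case False
    then obtain c where "range (polar F a) = H c" and "a \<in> V F c"
      using ex_mem_V[OF assms(1,2)] by blast
    with \<open>range (polar F a) \<subseteq> H b\<close> show ?thesis
      using H_subset_imp_eq assms(3) by metis
  qed (simp add: V_def T_def)
qed

lemma f2_subspace_V:
  assumes "is_APN F" and "is_quadratic F" and "b \<noteq> 0"
  shows "f2_subspace (V F b)"
proof -
  have "polar F (u + v) x = polar F u x + polar F v x" for u v x
    using additive.add[OF additive_polar[OF assms(2)]] by (metis polar_commute)
  then show ?thesis
    unfolding f2_subspace_def V_eq_radical[OF assms] by (simp add: dotp_add_right)
qed

lemma V_Int_V:
  assumes "is_APN F" and "is_quadratic F" and "b1 \<noteq> 0" and "b2 \<noteq> 0" and "b1 \<noteq> b2"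
  shows "V F b1 \<inter> V F b2 = {0}"
proof -
  have "a = 0" if "a \<in> V F b1" and "a \<in> V F b2" for a
  proof (rule ccontr)
    assume "a \<noteq> 0"
    then obtain c where c: "range (polar F a) = H c"
      using range_polar_eq_H[OF assms(1,2)] by blast
    have "range (polar F a) \<subseteq> H b1" and "range (polar F a) \<subseteq> H b2"
      using that by (auto simp: H_def intro: mem_V_imp_radical)
    then have "c = b1" and "c = b2"
      unfolding c using H_subset_imp_eq assms(3,4) by blast+
    with assms(5) show False
      by simp
  qed
  moreover have "0 \<in> V F b" for b
    by (simp add: V_def T_def)
  ultimately show ?thesis
    by blast
qed

theorem mainTheorem1:
  fixes F :: "bit ^ 'n \<Rightarrow> bit ^ 'n"
  assumes "even CARD('n)"
    and "is_APN F"
    and "is_quadratic F"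
  shows "(\<forall>b. b \<noteq> 0 \<longrightarrow> f2_subspace (V F b))
       \<and> (\<forall>b1 b2. b1 \<noteq> 0 \<longrightarrow> b2 \<noteq> 0 \<longrightarrow> b1 \<noteq> b2 \<longrightarrow> V F b1 \<inter> V F b2 = {0})
       \<and> (\<forall>x. x \<noteq> 0 \<longrightarrow> (\<exists>b. b \<noteq> 0 \<and> x \<in> V F b))"
proof (intro conjI allI impI)
  show "f2_subspace (V F b)" if "b \<noteq> 0" for b
    using f2_subspace_V[OF assms(2,3) that] .
  show "V F b1 \<inter> V F b2 = {0}" if "b1 \<noteq> 0" "b2 \<noteq> 0" "b1 \<noteq> b2" for b1 b2
    using V_Int_V[OF assms(2,3) that] .
  show "\<exists>b. b \<noteq> 0 \<and> x \<in> V F b" if "x \<noteq> 0" for x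
    using ex_mem_V[OF assms(2,3) that] by blast
qed

end
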